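(* Let $\mathbf{\Phi}\in\mathbb{R}^{m\times n}$ be a measurement matrix, let $\mathbf{x}\in\mathbb{R}^n$ be any $K$-sparse signal with support $T=\mathrm{supp}(\mathbf{x})$, and let $\mathbf{y}=\mathbf{\Phi}\mathbf{x}$. Run OMP on $(\mathbf{y},\mathbf{\Phi})$ (with $c>1$ a constant, as in OMP$_{cK}$), producing estimated supports $T^0=\emptyset\subseteq T^1\subseteq T^2\subseteq\cdots$. For an integer $k$ with $0\le k\le\lceil cK\rceil$, let $N^k=|T\setminus T^k|$ be the number of support indices not yet selected after $k$ iterations. Then $T\subseteq T^{k+\lceil cN^k\rceil}$ provided $$c\;\ge\;-\frac{4(1+\delta_1)}{1-\delta_s}\,\log\!\left(\frac12-\frac12\sqrt{\frac{\delta_{N^k}+\delta_s}{1+\delta_{N^k}}}\right),$$ where $s=|T\cup T^{k+\lfloor cN^k\rfloor}|$ and $\log$ is the natural logarithm.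
   Context: Orthogonal matching pursuit (OMP): given $\mathbf{y}\in\mathbb{R}^m$ and $\mathbf{\Phi}\in\mathbb{R}^{m\times n}$ with columns $\phi_1,\dots,\phi_n$, set $T^0=\emptyset$, $\mathbf{r}^0=\mathbf{y}$, and for $k=1,2,\dots$: choose $t^k\in\arg\max_{i\in\{1,\dots,n\}}|\langle \mathbf{r}^{k-1},\phi_i\rangle|$; set $T^k=T^{k-1}\cup\{t^k\}$; let $\hat{\mathbf{x}}^k=\arg\min_{\mathbf{u}:\,\mathrm{supp}(\mathbf{u})=T^k}\|\mathbf{y}-\mathbf{\Phi}\mathbf{u}\|_2$; set $\mathbf{r}^k=\mathbf{y}-\mathbf{\Phi}\hat{\mathbf{x}}^k$. OMP$_{cK}$ denotes OMP run for $\lceil cK\rceil$ (or more) iterations with a constant $c>1$. A vector is $K$-sparse if it has at most $K$ nonzero entries. The restricted isometry constant $\delta_j$ of $\mathbf{\Phi}$ is the smallest $\delta\ge0$ such that $(1-\delta)\|\mathbf{v}\|_2^2\le\|\mathbf{\Phi}\mathbf{v}\|_2^2\le(1+\delta)\|\mathbf{v}\|_2^2$ for every $j$-sparse $\mathbf{v}\in\mathbb{R}^n$. *)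

theory Defs
  imports "HOL-Analysis.Analysis"
begin

definition supp :: "real^'n \<Rightarrow> 'n set" where
  "supp v = {i. v $ i \<noteq> 0}"

definition ric :: "real^'n^'m \<Rightarrow> nat \<Rightarrow> real" where
  "ric \<Phi> j = Inf {\<delta>. \<delta> \<ge> 0 \<and>
     (\<forall>v::real^'n. card (supp v) \<le> j \<longrightarrow>
        (1 - \<delta>) * (norm v)\<^sup>2 \<le> (norm (\<Phi> *v v))\<^sup>2 \<and>
        (norm (\<Phi> *v v))\<^sup>2 \<le> (1 + \<delta>) * (norm v)\<^sup>2)}"

text \<open>A run of OMP on (y, Phi): T k is the estimated support after k iterations,
  r k the residual. Ties in the argmax are allowed to be broken arbitrarily.\<close>
definition omp_run :: "real^'n^'m \<Rightarrow> real^'m \<Rightarrow> (nat \<Rightarrow> 'n set) \<Rightarrow> (nat \<Rightarrow> real^'m) \<Rightarrow> bool" where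
  "omp_run \<Phi> y T r \<longleftrightarrow>
     T 0 = {} \<and> r 0 = y \<and>
     (\<forall>k. \<exists>t. (\<forall>i. \<bar>r k \<bullet> column i \<Phi>\<bar> \<le> \<bar>r k \<bullet> column t \<Phi>\<bar>) \<and>
              T (Suc k) = insert t (T k) \<and>
              (\<exists>u. supp u \<subseteq> T (Suc k) \<and>
                   (\<forall>w. supp w \<subseteq> T (Suc k) \<longrightarrow> norm (y - \<Phi> *v u) \<le> norm (y - \<Phi> *v w)) \<and>
                   r (Suc k) = y - \<Phi> *v u))"

end

theory Submission
  imports Defs
begin

(* Let Q k = |r k|^2. Since r k is orthogonal to the chosen columns and OMP picks the column most
   correlated with r k, one step closes at least the fraction (1 - delta_s) / ((1 + delta_1) |S - T k|)
   of the gap between Q k and |y - Phi v|^2, for any competitor v supported on T k \<union> S.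
   Stage l of a doubling schedule runs 2^(l-1) steps against the competitor containing the
   floor (2^(l-1) / lambda) largest missing entries of x, where q = 1/2 - 1/2 sqrt ((delta_N + delta_s)
   / (1 + delta_N)) and lambda = - ln q (1 + delta_1) / (1 - delta_s); this shrinks the gap by the
   factor q, and the hypothesis on c says exactly c \<ge> 4 lambda. At the first stage whose omitted
   energy is at most 2q times that of the previous stage, Q has fallen below the energy that the
   still unrecovered entries would force, so d \<ge> 1 further indices have been found after P \<le> c d
   steps. The bound on c is monotone in N and s, so induction on N finishes the proof. *)

lemma power2_norm_vec_eq_sum: "(norm (v::real^'n))\<^sup>2 = (\<Sum>i\<in>UNIV. (v$i)\<^sup>2)"
  unfolding power2_norm_eq_inner inner_vec_def by (simp add: power2_eq_square)

lemma inner_matrix_vector_mult: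
  "(w::real^'m) \<bullet> ((\<Phi>::real^'n^'m) *v v) = (\<Sum>i\<in>UNIV. v$i * (w \<bullet> column i \<Phi>))"
  by (simp add: matrix_mult_sum inner_sum_right scalar_mult_eq_scaleR)

lemma matrix_vector_mult_axis: "(\<Phi>::real^'n^'m) *v axis i a = a *\<^sub>R column i \<Phi>"
proof -
  have "\<Phi> *v axis i a = (\<Sum>j\<in>UNIV. axis i a $ j *\<^sub>R column j \<Phi>)"
    by (simp add: matrix_mult_sum scalar_mult_eq_scaleR)
  also have "\<dots> = (\<Sum>j\<in>{i}. axis i a $ j *\<^sub>R column j \<Phi>)"
    by (rule sum.mono_neutral_right) (auto simp: axis_def)
  finally show ?thesis by simp
qed

lemma supp_axis: "supp (axis i (a::real)) \<subseteq> {i}"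
  by (auto simp: supp_def axis_def)

lemma supp_add: "supp (u + w) \<subseteq> supp u \<union> supp (w::real^'n)"
  by (auto simp: supp_def)

lemma supp_diff: "supp (u - w) \<subseteq> supp u \<union> supp (w::real^'n)"
  by (auto simp: supp_def)

lemma supp_eq_empty_iff: "supp (w::real^'n) = {} \<longleftrightarrow> w = 0"
  by (auto simp: supp_def vec_eq_iff)

definition restrict_vec :: "'n set \<Rightarrow> real^'n \<Rightarrow> real^'n" where
  "restrict_vec A v = (\<chi> i. if i \<in> A then v$i else 0)"

lemma supp_restrict_vec: "supp (restrict_vec A v) \<subseteq> A"
  by (auto simp: supp_def restrict_vec_def)

lemma power2_norm_restrict_vec: "(norm (restrict_vec A v))\<^sup>2 = (\<Sum>i\<in>A. (v$i)\<^sup>2)"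
proof -
  have "(norm (restrict_vec A v))\<^sup>2 = (\<Sum>i\<in>UNIV. if i \<in> A then (v$i)\<^sup>2 else 0)"
    unfolding power2_norm_vec_eq_sum by (rule sum.cong) (auto simp: restrict_vec_def)
  also have "\<dots> = (\<Sum>i\<in>UNIV \<inter> A. (v$i)\<^sup>2)" by (rule sum.inter_restrict[symmetric]) simp
  finally show ?thesis by simp
qed

subsection \<open>Restricted isometry constants\<close>

definition rip_constants :: "real^'n^'m \<Rightarrow> nat \<Rightarrow> real set" where
  "rip_constants \<Phi> j = {\<delta>. \<delta> \<ge> 0 \<and>
     (\<forall>v::real^'n. card (supp v) \<le> j \<longrightarrow>
        (1 - \<delta>) * (norm v)\<^sup>2 \<le> (norm (\<Phi> *v v))\<^sup>2 \<and>
        (norm (\<Phi> *v v))\<^sup>2 \<le> (1 + \<delta>) * (norm v)\<^sup>2)}"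

lemma ric_eq_Inf_rip_constants: "ric \<Phi> j = Inf (rip_constants \<Phi> j)"
  by (simp add: ric_def rip_constants_def)

lemma rip_constants_nonempty: "rip_constants (\<Phi>::real^'n^'m) j \<noteq> {}"
proof -
  obtain K where K: "\<And>v. norm (\<Phi> *v v) \<le> norm v * K" "K > 0"
    using bounded_linear.pos_bounded[OF matrix_vector_mul_bounded_linear[of \<Phi>]] by blast
  have "K\<^sup>2 + 1 \<in> rip_constants \<Phi> j"
    unfolding rip_constants_def
  proof (intro CollectI conjI allI impI)
    fix v :: "real^'n"
    have "(norm (\<Phi> *v v))\<^sup>2 \<le> (norm v * K)\<^sup>2"
      using K(1)[of v] by (simp add: power_mono)
    also have "\<dots> \<le> (1 + (K\<^sup>2 + 1)) * (norm v)\<^sup>2"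
      by (simp add: power_mult_distrib algebra_simps)
    finally show "(norm (\<Phi> *v v))\<^sup>2 \<le> (1 + (K\<^sup>2 + 1)) * (norm v)\<^sup>2" .
    have "(1 - (K\<^sup>2 + 1)) * (norm v)\<^sup>2 \<le> 0"
      by (simp add: mult_nonpos_nonneg)
    then show "(1 - (K\<^sup>2 + 1)) * (norm v)\<^sup>2 \<le> (norm (\<Phi> *v v))\<^sup>2"
      by (meson order_trans zero_le_power2)
  qed simp
  then show ?thesis by blast
qed

lemma ric_nonneg: "ric \<Phi> j \<ge> 0"
  unfolding ric_eq_Inf_rip_constants
  by (rule cInf_greatest[OF rip_constants_nonempty]) (simp add: rip_constants_def)

lemma ric_mono: "j \<le> j' \<Longrightarrow> ric \<Phi> j \<le> ric \<Phi> j'"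
  unfolding ric_eq_Inf_rip_constants
proof (rule cInf_superset_mono[OF rip_constants_nonempty])
  show "bdd_below (rip_constants \<Phi> j)"
    by (rule bdd_belowI[of _ 0]) (simp add: rip_constants_def)
  show "j \<le> j' \<Longrightarrow> rip_constants \<Phi> j' \<subseteq> rip_constants \<Phi> j"
    by (auto simp: rip_constants_def)
qed

lemma ric_lower_bound:
  assumes "card (supp v) \<le> j"
  shows "(1 - ric \<Phi> j) * (norm v)\<^sup>2 \<le> (norm (\<Phi> *v v))\<^sup>2"
proof (cases "v = 0")
  case False
  then have pos: "(norm v)\<^sup>2 > 0" by simp
  have "1 - (norm (\<Phi> *v v))\<^sup>2 / (norm v)\<^sup>2 \<le> ric \<Phi> j"
    unfolding ric_eq_Inf_rip_constants
  proof (rule cInf_greatest[OF rip_constants_nonempty])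
    fix d assume "d \<in> rip_constants \<Phi> j"
    then have "(1 - d) * (norm v)\<^sup>2 \<le> (norm (\<Phi> *v v))\<^sup>2"
      using assms by (auto simp: rip_constants_def)
    then show "1 - (norm (\<Phi> *v v))\<^sup>2 / (norm v)\<^sup>2 \<le> d" using pos by (simp add: field_simps)
  qed
  then show ?thesis using pos by (simp add: field_simps)
qed simp

lemma ric_upper_bound:
  assumes "card (supp v) \<le> j"
  shows "(norm (\<Phi> *v v))\<^sup>2 \<le> (1 + ric \<Phi> j) * (norm v)\<^sup>2"
proof (cases "v = 0")
  case False
  then have pos: "(norm v)\<^sup>2 > 0" by simp
  have "(norm (\<Phi> *v v))\<^sup>2 / (norm v)\<^sup>2 - 1 \<le> ric \<Phi> j"
    unfolding ric_eq_Inf_rip_constants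
  proof (rule cInf_greatest[OF rip_constants_nonempty])
    fix d assume "d \<in> rip_constants \<Phi> j"
    then have "(norm (\<Phi> *v v))\<^sup>2 \<le> (1 + d) * (norm v)\<^sup>2"
      using assms by (auto simp: rip_constants_def)
    then show "(norm (\<Phi> *v v))\<^sup>2 / (norm v)\<^sup>2 - 1 \<le> d" using pos by (simp add: field_simps)
  qed
  then show ?thesis using pos by (simp add: field_simps)
qed simp

lemma power2_norm_column_le: "(norm (column t \<Phi>))\<^sup>2 \<le> 1 + ric \<Phi> 1"
proof -
  have "card (supp (axis t (1::real))) \<le> 1"
    using card_mono[OF _ supp_axis[of t 1]] by simp
  from ric_upper_bound[OF this, of \<Phi>] show ?thesis by (simp add: matrix_vector_mult_axis)
qed

definition rip_lower_on :: "real^'n^'m \<Rightarrow> real \<Rightarrow> 'n set \<Rightarrow> bool" where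
  "rip_lower_on \<Phi> \<delta> A \<longleftrightarrow> (\<forall>z. supp z \<subseteq> A \<longrightarrow> (1 - \<delta>) * (norm z)\<^sup>2 \<le> (norm (\<Phi> *v z))\<^sup>2)"

lemma rip_lower_onD: "rip_lower_on \<Phi> \<delta> A \<Longrightarrow> supp z \<subseteq> A \<Longrightarrow> (1 - \<delta>) * (norm z)\<^sup>2 \<le> (norm (\<Phi> *v z))\<^sup>2"
  by (simp add: rip_lower_on_def)

lemma rip_lower_on_subset: "rip_lower_on \<Phi> \<delta> A \<Longrightarrow> B \<subseteq> A \<Longrightarrow> rip_lower_on \<Phi> \<delta> B"
  by (auto simp: rip_lower_on_def)

lemma rip_lower_on_ric:
  fixes A :: "'n::finite set"
  assumes "card A \<le> j" "ric \<Phi> j \<le> \<delta>"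
  shows "rip_lower_on \<Phi> \<delta> A"
  unfolding rip_lower_on_def
proof (intro allI impI)
  fix z :: "real^'n" assume "supp z \<subseteq> A"
  then have "card (supp z) \<le> card A" by (intro card_mono) simp_all
  then have "card (supp z) \<le> j" using assms(1) by linarith
  then have "(1 - ric \<Phi> j) * (norm z)\<^sup>2 \<le> (norm (\<Phi> *v z))\<^sup>2" by (rule ric_lower_bound)
  moreover have "(1 - \<delta>) * (norm z)\<^sup>2 \<le> (1 - ric \<Phi> j) * (norm z)\<^sup>2"
    using assms(2) by (intro mult_right_mono) auto
  ultimately show "(1 - \<delta>) * (norm z)\<^sup>2 \<le> (norm (\<Phi> *v z))\<^sup>2" by linarith
qed

subsection \<open>Least subset sums\<close>

definition least_subset_sum :: "('a \<Rightarrow> real) \<Rightarrow> 'a set \<Rightarrow> nat \<Rightarrow> real" where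
  "least_subset_sum f M m = Min (sum f ` {A. A \<subseteq> M \<and> card A = m})"

lemma least_subset_sum_attained:
  assumes "finite M" "m \<le> card M"
  obtains A where "A \<subseteq> M" "card A = m" "sum f A = least_subset_sum f M m"
proof -
  have fin: "finite {A. A \<subseteq> M \<and> card A = m}" using assms(1) by auto
  have ne: "{A. A \<subseteq> M \<and> card A = m} \<noteq> {}"
    using obtain_subset_with_card_n[OF assms(2)] by blast
  have "least_subset_sum f M m \<in> sum f ` {A. A \<subseteq> M \<and> card A = m}"
    unfolding least_subset_sum_def using fin ne by (intro Min_in) auto
  then show ?thesis using that by auto
qed

lemma least_subset_sum_le:
  assumes "finite M" "A \<subseteq> M" "card A = m"
  shows "least_subset_sum f M m \<le> sum f A"
  unfolding least_subset_sum_def using assms by (intro Min_le) auto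

lemma least_subset_sum_le_superset:
  assumes "finite M" "A \<subseteq> M" "m \<le> card A" "\<And>i. f i \<ge> 0"
  shows "least_subset_sum f M m \<le> sum f A"
proof -
  obtain B where B: "B \<subseteq> A" "card B = m" using obtain_subset_with_card_n[OF assms(3)] by blast
  have "least_subset_sum f M m \<le> sum f B" using assms B by (intro least_subset_sum_le) auto
  also have "\<dots> \<le> sum f A" using B assms by (intro sum_mono2) (auto intro: finite_subset)
  finally show ?thesis .
qed

lemma least_subset_sum_0: "finite M \<Longrightarrow> least_subset_sum f M 0 = 0"
proof -
  assume "finite M"
  then have "{A. A \<subseteq> M \<and> card A = 0} = {{}}" by (auto dest: finite_subset)
  then show ?thesis unfolding least_subset_sum_def by simp
qed

lemma least_subset_sum_card: "finite M \<Longrightarrow> least_subset_sum f M (card M) = sum f M"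
proof -
  assume "finite M"
  then have "{A. A \<subseteq> M \<and> card A = card M} = {M}" using card_subset_eq by blast
  then show ?thesis unfolding least_subset_sum_def by simp
qed

lemma least_subset_sum_nonneg:
  assumes "finite M" "m \<le> card M" "\<And>i. f i \<ge> 0"
  shows "least_subset_sum f M m \<ge> 0"
  using least_subset_sum_attained[OF assms(1,2), of f] assms(3) by (metis sum_nonneg)

subsection \<open>Real arithmetic of the doubling argument\<close>

lemma one_minus_power_le_exp:
  fixes \<beta> lam :: real and s p :: nat
  assumes "0 \<le> \<beta>" "\<beta> \<le> 1" "s \<ge> 1" "lam > 0" "real s \<le> real p / lam"
  shows "(1 - \<beta> / s) ^ p \<le> exp (- \<beta> * lam)"
proof -
  have s: "real s \<ge> 1" using assms(3) by simp
  have "(1 - \<beta> / s) ^ p \<le> exp (- \<beta> / s) ^ p"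
    using exp_ge_add_one_self[of "- \<beta> / s"] assms(1,2) s by (intro power_mono) (auto simp: field_simps)
  also have "\<dots> = exp (real p * (- \<beta> / s))" by (rule exp_of_nat_mult[symmetric])
  also have "\<dots> \<le> exp (- \<beta> * lam)"
  proof -
    have "\<beta> * (lam * s) \<le> \<beta> * p" using assms by (intro mult_left_mono) (auto simp: field_simps)
    then show ?thesis using s by (simp add: field_simps)
  qed
  finally show ?thesis .
qed

lemma nat_floor_add_le:
  fixes c :: real
  assumes "c \<ge> 0" "real P + c * real N' \<le> c * real N"
  shows "P + nat \<lfloor>c * real N'\<rfloor> \<le> nat \<lfloor>c * real N\<rfloor>"
proof -
  have "\<lfloor>c * real N' + of_int (int P)\<rfloor> \<le> \<lfloor>c * real N\<rfloor>" using assms(2) by (intro floor_mono) simp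
  moreover have "\<lfloor>c * real N'\<rfloor> \<ge> 0" using assms(1) by simp
  ultimately show ?thesis by simp linarith
qed

lemma nat_ceiling_add_le:
  fixes c :: real
  assumes "c \<ge> 0" "real P + c * real N' \<le> c * real N"
  shows "P + nat \<lceil>c * real N'\<rceil> \<le> nat \<lceil>c * real N\<rceil>"
proof -
  have "\<lceil>c * real N' + of_int (int P)\<rceil> \<le> \<lceil>c * real N\<rceil>" using assms(2) by (intro ceiling_mono) simp
  then have "\<lceil>c * real N'\<rceil> + int P \<le> \<lceil>c * real N\<rceil>"
    using ceiling_add_of_int[of "c * real N'" "int P"] by (simp del: ceiling_add_of_int)
  moreover have "0 \<le> c * real N'" using assms(1) by simp
  then have "\<lceil>c * real N'\<rceil> \<ge> 0" by simp
  ultimately show ?thesis by linarith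
qed

text \<open>omp_bound (1 + ric \<Phi> 1) (ric \<Phi> N) (ric \<Phi> s) is the lower bound imposed on c.\<close>
definition omp_ratio :: "real \<Rightarrow> real \<Rightarrow> real" where
  "omp_ratio g \<delta> = 1/2 - 1/2 * sqrt ((g + \<delta>) / (1 + g))"

definition omp_bound :: "real \<Rightarrow> real \<Rightarrow> real \<Rightarrow> real" where
  "omp_bound D g \<delta> = - (4 * D / (1 - \<delta>)) * ln (omp_ratio g \<delta>)"

lemma omp_ratio_bounds:
  assumes "0 \<le> g" "0 \<le> \<delta>" "\<delta> < 1"
  shows "0 < omp_ratio g \<delta>" "omp_ratio g \<delta> \<le> 1/2"
    and "4 * omp_ratio g \<delta> * (1 - omp_ratio g \<delta>) = (1 - \<delta>) / (1 + g)"
proof -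
  define w where "w = (g + \<delta>) / (1 + g)"
  have w: "0 \<le> w" "w < 1" using assms unfolding w_def by (auto simp: field_simps)
  have q: "omp_ratio g \<delta> = 1/2 - 1/2 * sqrt w" unfolding omp_ratio_def w_def ..
  show "0 < omp_ratio g \<delta>" "omp_ratio g \<delta> \<le> 1/2" using w unfolding q by auto
  have "4 * omp_ratio g \<delta> * (1 - omp_ratio g \<delta>) = 1 - (sqrt w)\<^sup>2"
    unfolding q by (simp add: algebra_simps power2_eq_square)
  also have "\<dots> = (1 - \<delta>) / (1 + g)" using w assms unfolding w_def by (simp add: field_simps)
  finally show "4 * omp_ratio g \<delta> * (1 - omp_ratio g \<delta>) = (1 - \<delta>) / (1 + g)" .
qed

lemma omp_ratio_eq_half_iff:
  assumes "0 \<le> g" "0 \<le> \<delta>"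
  shows "omp_ratio g \<delta> = 1/2 \<longleftrightarrow> g = 0 \<and> \<delta> = 0"
  using assms by (auto simp: omp_ratio_def add_nonneg_eq_0_iff)

lemma omp_bound_mono:
  assumes "0 \<le> g'" "g' \<le> g" "0 \<le> \<delta>'" "\<delta>' \<le> \<delta>" "\<delta> < 1" "D \<ge> 1"
  shows "omp_bound D g' \<delta>' \<le> omp_bound D g \<delta>"
proof -
  define w where "w = (g + \<delta>) / (1 + g)"
  define w' where "w' = (g' + \<delta>') / (1 + g')"
  have w'0: "0 \<le> w'" unfolding w'_def using assms by simp
  have ww: "w' \<le> w"
  proof -
    have "w' \<le> (g' + \<delta>) / (1 + g')" unfolding w'_def using assms by (intro divide_right_mono) auto
    also have "\<dots> \<le> (g + \<delta>) / (1 + g)"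
    proof -
      have "g' * (1 - \<delta>) \<le> g * (1 - \<delta>)" using assms by (intro mult_right_mono) auto
      then have "(g' + \<delta>) * (1 + g) \<le> (g + \<delta>) * (1 + g')" by (simp add: algebra_simps)
      then show ?thesis using assms by (simp add: divide_simps)
    qed
    finally show ?thesis unfolding w_def .
  qed
  define h where "h = omp_ratio g \<delta>"
  define h' where "h' = omp_ratio g' \<delta>'"
  have h: "0 < h" "h \<le> h'" "h' \<le> 1/2"
    using omp_ratio_bounds[of g \<delta>] assms ww w'0
    unfolding h_def h'_def omp_ratio_def w_def[symmetric] w'_def[symmetric] by auto
  have "(4 * D / (1 - \<delta>')) * (- ln h') \<le> (4 * D / (1 - \<delta>)) * (- ln h)"
  proof (rule mult_mono)
    show "4 * D / (1 - \<delta>') \<le> 4 * D / (1 - \<delta>)" using assms by (intro divide_left_mono) auto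
  qed (use h assms in auto)
  then show ?thesis unfolding omp_bound_def h_def h'_def by simp
qed

definition doubling_rate :: "real \<Rightarrow> real \<Rightarrow> real \<Rightarrow> real" where
  "doubling_rate D g \<delta> = - ln (omp_ratio g \<delta>) / ((1 - \<delta>) / D)"

lemma doubling_rate:
  assumes "1 \<le> D" "0 \<le> g" "0 \<le> \<delta>" "\<delta> < 1"
  shows "0 < doubling_rate D g \<delta>" "omp_bound D g \<delta> = 4 * doubling_rate D g \<delta>"
    and "exp (- ((1 - \<delta>) / D) * doubling_rate D g \<delta>) = omp_ratio g \<delta>"
proof -
  have q: "0 < omp_ratio g \<delta>" "omp_ratio g \<delta> < 1" using omp_ratio_bounds[OF assms(2-4)] by auto
  have \<beta>: "0 < (1 - \<delta>) / D" using assms by simp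
  have "0 < - ln (omp_ratio g \<delta>)" using q by simp
  then show "0 < doubling_rate D g \<delta>" unfolding doubling_rate_def using \<beta> by (rule divide_pos_pos)
  show "omp_bound D g \<delta> = 4 * doubling_rate D g \<delta>"
    unfolding omp_bound_def doubling_rate_def using assms by (simp add: field_simps)
  show "exp (- ((1 - \<delta>) / D) * doubling_rate D g \<delta>) = omp_ratio g \<delta>"
    unfolding doubling_rate_def using q \<beta> assms(1,4) by simp
qed

definition step_factor :: "real \<Rightarrow> real \<Rightarrow> nat \<Rightarrow> real" where
  "step_factor D \<delta> sz = 1 - (1 - \<delta>) / D / real sz"

lemma step_factor_bounds:
  assumes "D \<ge> 1" "0 \<le> \<delta>" "\<delta> < 1" "sz \<ge> 1"
  shows "0 \<le> step_factor D \<delta> sz" "step_factor D \<delta> sz \<le> 1"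
proof -
  have b: "(1 - \<delta>) / D \<le> 1" "0 \<le> (1 - \<delta>) / D" using assms by (auto simp: field_simps)
  have "(1 - \<delta>) / D / real sz \<le> (1 - \<delta>) / D / 1"
    using assms(4) b by (intro divide_left_mono) auto
  moreover have "0 \<le> (1 - \<delta>) / D / real sz" by (rule divide_nonneg_nonneg[OF b(2)]) simp
  ultimately show "0 \<le> step_factor D \<delta> sz" "step_factor D \<delta> sz \<le> 1"
    unfolding step_factor_def using b by linarith+
qed

lemma step_factor_antimono:
  assumes "D \<ge> 1" "\<delta> < 1" "1 \<le> m" "m \<le> sz"
  shows "step_factor D \<delta> m \<le> step_factor D \<delta> sz"
proof -
  have "(1 - \<delta>) / D / real sz \<le> (1 - \<delta>) / D / real m"
    using assms by (intro divide_left_mono) auto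
  then show ?thesis unfolding step_factor_def by simp
qed

text \<open>Stage l of the doubling argument runs 2^(l-1) OMP steps against a competitor containing the
  stage_size lam l largest missing entries of x.\<close>
definition stage_size :: "real \<Rightarrow> nat \<Rightarrow> nat" where
  "stage_size lam l = (if l = 0 then 0 else nat \<lfloor>(2::real) ^ (l - 1) / lam\<rfloor>)"

lemma step_factor_stage_size_power:
  assumes "lam > 0" "D \<ge> 1" "0 \<le> \<delta>" "\<delta> < 1" "stage_size lam l \<noteq> 0"
  shows "step_factor D \<delta> (stage_size lam l) ^ 2 ^ (l - 1) \<le> exp (- ((1 - \<delta>) / D) * lam)"
  unfolding step_factor_def
proof (rule one_minus_power_le_exp)
  have "l \<noteq> 0" using assms(5) by (auto simp: stage_size_def split: if_splits)
  then show "real (stage_size lam l) \<le> real (2 ^ (l - 1)) / lam"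
    using assms(1) by (simp add: stage_size_def)
qed (use assms in \<open>auto simp: field_simps\<close>)

lemma stage_size_unbounded:
  assumes "lam > 0"
  obtains n where "N \<le> stage_size lam (Suc n)"
proof -
  obtain n where "real N * lam < 2 ^ n" using real_arch_pow[of 2 "real N * lam"] by auto
  then have "real N < 2 ^ n / lam" using assms by (simp add: field_simps)
  then have "N \<le> stage_size lam (Suc n)" unfolding stage_size_def by simp linarith
  then show ?thesis using that by blast
qed

lemma stage_budget:
  assumes "lam > 0" "4 * lam \<le> c" "1 \<le> c" "1 \<le> L"
  shows "real (2 ^ L - 1) \<le> c * real (stage_size lam (L - 1) + 1)"
proof (cases "L = 1")
  case True
  then show ?thesis using assms by (simp add: stage_size_def)
next
  case False
  define j where "j = L - 2"
  have j: "L = j + 2" using False assms(4) unfolding j_def by simp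
  have "real (stage_size lam (L - 1)) > (2::real) ^ j / lam - 1"
    unfolding stage_size_def j using assms(1) by simp
  then have d: "real (stage_size lam (L - 1) + 1) > (2::real) ^ j / lam" by simp
  have "real (2 ^ L - 1) < 2 ^ L" by (simp add: of_nat_diff)
  also have "(2::real) ^ L = 4 * lam * ((2::real) ^ j / lam)" using assms(1) unfolding j by simp
  also have "\<dots> \<le> 4 * lam * real (stage_size lam (L - 1) + 1)"
    using d assms(1) by (intro mult_left_mono) auto
  also have "\<dots> \<le> c * real (stage_size lam (L - 1) + 1)" using assms(2) by (intro mult_right_mono) auto
  finally show ?thesis by simp
qed

lemma first_contraction_index:
  fixes u :: "nat \<Rightarrow> real"
  assumes "\<And>l. u l \<ge> 0" "u 0 > 0" "u n = 0" "a \<ge> 0"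
  obtains L where "1 \<le> L" "u L \<le> a * u (L - 1)" "u (L - 1) > 0"
    "\<And>l. 1 \<le> l \<Longrightarrow> l < L \<Longrightarrow> a * u (l - 1) < u l"
proof -
  let ?P = "\<lambda>l. 1 \<le> l \<and> u l \<le> a * u (l - 1)"
  have "n \<noteq> 0" using assms(2,3) by (metis less_irrefl)
  then have "?P n" using assms by simp
  define L where "L = (LEAST l. ?P l)"
  have L: "1 \<le> L" "u L \<le> a * u (L - 1)" using LeastI[of ?P, OF \<open>?P n\<close>] unfolding L_def by auto
  have less: "a * u (l - 1) < u l" if "1 \<le> l" "l < L" for l
    using not_less_Least[of l ?P] that unfolding L_def by auto
  have "u (L - 1) > 0"
  proof (cases "L = 1")
    case False
    then have "a * u (L - 1 - 1) < u (L - 1)" using L by (intro less) auto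
    moreover have "a * u (L - 1 - 1) \<ge> 0" using assms by simp
    ultimately show ?thesis by linarith
  qed (use assms in simp)
  with L less that show ?thesis by blast
qed

text \<open>Solving the recurrence exactly: with C l = 2(1 - q) - (1 - 2q)/2^l, the stages before L keep
  Qs l \<le> (1 + g) C l u l, and C (L-1) < 2(1 - q) gives the strict bound.\<close>
lemma doubling_recurrence_bound:
  fixes Qs u :: "nat \<Rightarrow> real"
  assumes q: "0 < q" "q < 1/2" and g: "g \<ge> 0" and L: "L \<ge> 1"
    and uL: "u L \<le> 2 * q * u (L - 1)"
    and ult: "\<And>l. 1 \<le> l \<Longrightarrow> l < L \<Longrightarrow> 2 * q * u (l - 1) < u l"
    and upos: "u (L - 1) > 0"
    and base: "Qs 0 \<le> (1 + g) * u 0"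
    and stage: "\<And>l. 1 \<le> l \<Longrightarrow> l \<le> L \<Longrightarrow> Qs l \<le> (1 - q) * (1 + g) * u l + q * Qs (l - 1)"
  shows "Qs L < (1 + g) * (4 * q * (1 - q)) * u (L - 1)"
proof -
  define C where "C l = 2 * (1 - q) - (1 - 2 * q) / 2 ^ l" for l :: nat
  have C0: "C l \<ge> 0" for l
  proof -
    have "(1 - 2 * q) / 2 ^ l \<le> (1 - 2 * q)" using q by (simp add: divide_le_eq)
    then show ?thesis unfolding C_def using q by simp
  qed
  have inv: "l \<le> L - 1 \<Longrightarrow> Qs l \<le> (1 + g) * C l * u l" for l
  proof (induction l)
    case 0 then show ?case using base by (simp add: C_def)
  next
    case (Suc l)
    have l: "1 \<le> Suc l" "Suc l < L" using Suc.prems L by auto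
    have "Qs (Suc l) \<le> (1 - q) * (1 + g) * u (Suc l) + q * Qs l" using stage[of "Suc l"] l by simp
    also have "\<dots> \<le> (1 - q) * (1 + g) * u (Suc l) + ((1 + g) * C l / 2) * (2 * q * u l)"
      using Suc q by simp
    also have "\<dots> \<le> (1 - q) * (1 + g) * u (Suc l) + ((1 + g) * C l / 2) * u (Suc l)"
      using ult[OF l] C0[of l] g by (intro add_left_mono mult_left_mono) auto
    also have "\<dots> = (1 + g) * C (Suc l) * u (Suc l)" unfolding C_def by (simp add: field_simps)
    finally show ?case .
  qed
  have "Qs L \<le> (1 - q) * (1 + g) * u L + q * Qs (L - 1)" using stage[of L] L by simp
  also have "\<dots> \<le> (1 - q) * (1 + g) * (2 * q * u (L - 1)) + q * ((1 + g) * C (L - 1) * u (L - 1))"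
    using uL inv[of "L - 1"] q g by (intro add_mono mult_left_mono) auto
  also have "\<dots> = (1 + g) * u (L - 1) * (2 * q * (1 - q) + q * C (L - 1))" by (simp add: algebra_simps)
  also have "\<dots> < (1 + g) * u (L - 1) * (4 * q * (1 - q))"
  proof (rule mult_strict_left_mono)
    have "q * C (L - 1) < q * (2 * (1 - q))" unfolding C_def using q by (intro mult_strict_left_mono) auto
    then show "2 * q * (1 - q) + q * C (L - 1) < 4 * q * (1 - q)" by (simp add: algebra_simps)
  qed (use g upos in simp)
  finally show ?thesis by (simp add: algebra_simps)
qed

subsection \<open>A run of OMP on a sparse signal\<close>

locale omp =
  fixes \<Phi> :: "real^'n^'m" and x :: "real^'n" and T :: "nat \<Rightarrow> 'n set" and r :: "nat \<Rightarrow> real^'m"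
  assumes run: "omp_run \<Phi> (\<Phi> *v x) T r"
begin

definition res_energy :: "nat \<Rightarrow> real" where
  "res_energy k = (norm (r k))\<^sup>2"

definition approx_energy :: "real^'n \<Rightarrow> real" where
  "approx_energy v = (norm (\<Phi> *v x - \<Phi> *v v))\<^sup>2"

lemma T_0: "T 0 = {}"
  using run by (simp add: omp_run_def)

lemma T_Suc: "\<exists>t. (\<forall>i. \<bar>r k \<bullet> column i \<Phi>\<bar> \<le> \<bar>r k \<bullet> column t \<Phi>\<bar>) \<and> T (Suc k) = insert t (T k)"
  using run unfolding omp_run_def by blast

lemma residual_least_squares:
  "\<exists>u. supp u \<subseteq> T k \<and> r k = \<Phi> *v x - \<Phi> *v u \<and>
     (\<forall>w. supp w \<subseteq> T k \<longrightarrow> norm (r k) \<le> norm (\<Phi> *v x - \<Phi> *v w))"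
proof (cases k)
  case 0
  have "r 0 = \<Phi> *v x" using run by (simp add: omp_run_def)
  then show ?thesis using 0 T_0 supp_eq_empty_iff by (intro exI[of _ 0]) auto
next
  case (Suc j)
  then show ?thesis using run unfolding omp_run_def by metis
qed

lemma T_mono: "k \<le> k' \<Longrightarrow> T k \<subseteq> T k'"
proof (induction k' rule: dec_induct)
  case (step n) then show ?case using T_Suc[of n] by blast
qed simp

lemma res_energy_le: "supp w \<subseteq> T k \<Longrightarrow> res_energy k \<le> approx_energy w"
  using residual_least_squares[of k] unfolding res_energy_def approx_energy_def
  by (auto intro: power_mono)

lemma res_energy_Suc_le: "res_energy (Suc k) \<le> res_energy k"
proof -
  obtain u where u: "supp u \<subseteq> T k" "r k = \<Phi> *v x - \<Phi> *v u" using residual_least_squares by blast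
  have "res_energy (Suc k) \<le> approx_energy u"
    using u(1) T_mono[of k "Suc k"] by (intro res_energy_le) auto
  then show ?thesis using u(2) by (simp add: res_energy_def approx_energy_def)
qed

lemma res_energy_antimono: "k \<le> k' \<Longrightarrow> res_energy k' \<le> res_energy k"
  by (induction k' rule: dec_induct) (auto intro: order_trans[OF res_energy_Suc_le])

lemma residual_orthogonal:
  assumes "i \<in> T k" shows "r k \<bullet> column i \<Phi> = 0"
proof -
  obtain u where u: "supp u \<subseteq> T k" "r k = \<Phi> *v x - \<Phi> *v u"
    "\<forall>w. supp w \<subseteq> T k \<longrightarrow> norm (r k) \<le> norm (\<Phi> *v x - \<Phi> *v w)"
    using residual_least_squares by blast
  define a where "a = r k \<bullet> column i \<Phi>"
  define C where "C = (norm (column i \<Phi>))\<^sup>2"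
  define e where "e = a / (C + 1)"
  have C0: "C \<ge> 0" by (simp add: C_def)
  have "supp (u + axis i e) \<subseteq> T k"
    using u(1) supp_add[of u "axis i e"] supp_axis[of i e] assms by auto
  then have "norm (r k) \<le> norm (\<Phi> *v x - \<Phi> *v (u + axis i e))" using u(3) by blast
  also have "\<Phi> *v x - \<Phi> *v (u + axis i e) = r k - e *\<^sub>R column i \<Phi>"
    using u(2) by (simp add: matrix_vector_right_distrib matrix_vector_mult_axis)
  finally have "(norm (r k))\<^sup>2 \<le> (norm (r k - e *\<^sub>R column i \<Phi>))\<^sup>2"
    by (simp add: power_mono)
  also have "\<dots> = (norm (r k))\<^sup>2 - 2 * e * a + e\<^sup>2 * C"
    unfolding a_def C_def power2_norm_eq_inner
    by (simp add: inner_diff_left inner_diff_right inner_commute power2_eq_square algebra_simps)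
  finally have "0 \<le> - 2 * e * a + e\<^sup>2 * C" by simp
  moreover have "a = e * (C + 1)" using C0 unfolding e_def by simp
  ultimately have "e\<^sup>2 * (C + 2) \<le> 0" by (simp add: algebra_simps power2_eq_square)
  then have "e = 0" using C0 by (simp add: mult_le_0_iff)
  then have "a = 0" using C0 unfolding e_def by simp
  then show ?thesis unfolding a_def .
qed

text \<open>The chosen column t realises the largest correlation, and moving along it by the step
  (r k \<bullet> column t \<Phi>) / (1 + \<delta>_1) is admissible for the least-squares problem of step k + 1.\<close>
lemma res_energy_Suc_le_correlation:
  "res_energy (Suc k) \<le> res_energy k - (r k \<bullet> column i \<Phi>)\<^sup>2 / (1 + ric \<Phi> 1)"
proof -
  obtain t where t: "\<forall>i. \<bar>r k \<bullet> column i \<Phi>\<bar> \<le> \<bar>r k \<bullet> column t \<Phi>\<bar>" "T (Suc k) = insert t (T k)"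
    using T_Suc by blast
  obtain u where u: "supp u \<subseteq> T k" "r k = \<Phi> *v x - \<Phi> *v u" using residual_least_squares by blast
  define a where "a = r k \<bullet> column t \<Phi>"
  define C where "C = (norm (column t \<Phi>))\<^sup>2"
  define D where "D = 1 + ric \<Phi> 1"
  define e where "e = a / D"
  have D0: "D > 0" using ric_nonneg[of \<Phi> 1] by (simp add: D_def)
  have CD: "C \<le> D" using power2_norm_column_le by (simp add: C_def D_def)
  have "supp (u + axis t e) \<subseteq> T (Suc k)"
    using u(1) supp_add[of u "axis t e"] supp_axis[of t e] t(2) by auto
  then have "res_energy (Suc k) \<le> approx_energy (u + axis t e)" by (rule res_energy_le)
  also have "\<dots> = (norm (r k - e *\<^sub>R column t \<Phi>))\<^sup>2"
    using u(2) by (simp add: approx_energy_def matrix_vector_right_distrib matrix_vector_mult_axis diff_diff_eq)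
  also have "\<dots> = res_energy k - 2 * e * a + e\<^sup>2 * C"
    unfolding a_def C_def power2_norm_eq_inner res_energy_def
    by (simp add: inner_diff_left inner_diff_right inner_commute power2_eq_square algebra_simps)
  also have "\<dots> \<le> res_energy k - 2 * e * a + e\<^sup>2 * D"
    using CD by (simp add: mult_left_mono)
  also have "\<dots> = res_energy k - a\<^sup>2 / D"
    using D0 unfolding e_def by (simp add: field_simps power2_eq_square)
  also have "\<dots> \<le> res_energy k - (r k \<bullet> column i \<Phi>)\<^sup>2 / D"
  proof -
    have "(r k \<bullet> column i \<Phi>)\<^sup>2 \<le> a\<^sup>2" unfolding a_def using t(1) by (metis abs_le_square_iff)
    then show ?thesis using D0 by (simp add: divide_right_mono)
  qed
  finally show ?thesis by (simp add: D_def)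
qed

lemma correlation_power2_le:
  assumes "supp d \<subseteq> T k \<union> S"
  shows "(r k \<bullet> (\<Phi> *v d))\<^sup>2
    \<le> (norm d)\<^sup>2 * (real (card (S - T k)) * (1 + ric \<Phi> 1) * (res_energy k - res_energy (Suc k)))"
proof -
  obtain t where t: "\<forall>i. \<bar>r k \<bullet> column i \<Phi>\<bar> \<le> \<bar>r k \<bullet> column t \<Phi>\<bar>" using T_Suc by blast
  define c where "c i = r k \<bullet> column i \<Phi>" for i
  define A where "A = S - T k"
  have ci: "(c i)\<^sup>2 \<le> (c t)\<^sup>2" for i using t unfolding c_def by (metis abs_le_square_iff)
  have ct: "(c t)\<^sup>2 \<le> (1 + ric \<Phi> 1) * (res_energy k - res_energy (Suc k))"
    using res_energy_Suc_le_correlation[of k t] ric_nonneg[of \<Phi> 1] unfolding c_def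
    by (simp add: field_simps)
  have "r k \<bullet> (\<Phi> *v d) = (\<Sum>i\<in>UNIV. d$i * c i)" unfolding c_def by (rule inner_matrix_vector_mult)
  also have "\<dots> = (\<Sum>i\<in>A. d$i * c i)"
  proof (rule sum.mono_neutral_right)
    show "\<forall>i\<in>UNIV - A. d $ i * c i = 0"
      using assms residual_orthogonal unfolding A_def c_def supp_def by auto
  qed auto
  finally have "(r k \<bullet> (\<Phi> *v d))\<^sup>2 = (\<Sum>i\<in>A. d$i * c i)\<^sup>2" by simp
  also have "\<dots> \<le> (\<Sum>i\<in>A. (d$i)\<^sup>2) * (\<Sum>i\<in>A. (c i)\<^sup>2)"
    by (rule Cauchy_Schwarz_ineq_sum)
  also have "\<dots> \<le> (norm d)\<^sup>2 * (real (card A) * (c t)\<^sup>2)"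
  proof (rule mult_mono)
    show "(\<Sum>i\<in>A. (d$i)\<^sup>2) \<le> (norm d)\<^sup>2"
      unfolding power2_norm_vec_eq_sum by (rule sum_mono2) auto
    show "(\<Sum>i\<in>A. (c i)\<^sup>2) \<le> real (card A) * (c t)\<^sup>2"
      using sum_bounded_above[of A "\<lambda>i. (c i)\<^sup>2"] ci by simp
  qed (auto intro: sum_nonneg)
  also have "\<dots> \<le> (norm d)\<^sup>2 * (real (card A) * ((1 + ric \<Phi> 1) * (res_energy k - res_energy (Suc k))))"
    using ct by (intro mult_left_mono) auto
  finally show ?thesis unfolding A_def by (simp add: mult.assoc)
qed

text \<open>With d = v - u, where u is the current least-squares solution, the gap between res_energy k
  and approx_energy v equals 2p - |\<Phi> d|^2 for p = r k \<bullet> \<Phi> d, so AM-GM gives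
  gap * |\<Phi> d|^2 \<le> p^2; now bound |\<Phi> d|^2 below by RIP and p^2 above by correlation_power2_le.\<close>
lemma energy_gap_le_decrease:
  assumes v: "supp v \<subseteq> T k \<union> S" and rip: "rip_lower_on \<Phi> \<delta> (T k \<union> S)"
    and gap: "approx_energy v \<le> res_energy k"
  shows "(1 - \<delta>) * (res_energy k - approx_energy v)
    \<le> real (card (S - T k)) * (1 + ric \<Phi> 1) * (res_energy k - res_energy (Suc k))"
proof -
  obtain u where u: "supp u \<subseteq> T k" "r k = \<Phi> *v x - \<Phi> *v u" using residual_least_squares by blast
  define G where "G = res_energy k - approx_energy v"
  define R where "R = real (card (S - T k)) * (1 + ric \<Phi> 1) * (res_energy k - res_energy (Suc k))"
  define d where "d = v - u"
  define p where "p = r k \<bullet> (\<Phi> *v d)"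
  define X where "X = (norm (\<Phi> *v d))\<^sup>2"
  have supp_d: "supp d \<subseteq> T k \<union> S" using supp_diff[of v u] v u(1) unfolding d_def by auto
  have "\<Phi> *v x - \<Phi> *v v = r k - \<Phi> *v d"
    unfolding d_def u(2) by (simp add: matrix_vector_mult_diff_distrib)
  then have "G + X = 2 * p"
    unfolding G_def X_def p_def res_energy_def approx_energy_def power2_norm_eq_inner
    by (simp add: inner_diff_left inner_diff_right inner_commute)
  moreover have "4 * (G * X) \<le> (G + X)\<^sup>2"
    using zero_le_power2[of "G - X"] by (simp add: power2_eq_square algebra_simps)
  ultimately have GX: "G * X \<le> p\<^sup>2" by (simp add: power2_eq_square)
  have "(1 - \<delta>) * G * (norm d)\<^sup>2 = G * ((1 - \<delta>) * (norm d)\<^sup>2)" by simp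
  also have "\<dots> \<le> G * X"
    using rip_lower_onD[OF rip supp_d] gap unfolding X_def G_def by (intro mult_left_mono) auto
  also have "\<dots> \<le> (norm d)\<^sup>2 * R"
    using GX correlation_power2_le[OF supp_d] unfolding p_def[symmetric] R_def[symmetric] by linarith
  finally have main: "(norm d)\<^sup>2 * ((1 - \<delta>) * G) \<le> (norm d)\<^sup>2 * R" by (simp only: ac_simps)
  show ?thesis
  proof (cases "d = 0")
    case True
    then have "v = u" unfolding d_def by simp
    then have "G = 0" using u(2) unfolding G_def res_energy_def approx_energy_def by simp
    then show ?thesis using res_energy_Suc_le[of k] ric_nonneg[of \<Phi> 1] unfolding G_def R_def by simp
  next
    case False
    then have "(norm d)\<^sup>2 > 0" by simp
    with main show ?thesis unfolding G_def R_def by (simp only: mult_le_cancel_left_pos)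
  qed
qed

lemma excess_energy_step:
  assumes v: "supp v \<subseteq> T t \<union> S" and rip: "rip_lower_on \<Phi> \<delta> (T t \<union> S)"
    and sz: "card S \<le> sz" "1 \<le> sz" and \<delta>: "0 \<le> \<delta>" "\<delta> < 1"
  shows "max (res_energy (Suc t) - approx_energy v) 0
    \<le> step_factor (1 + ric \<Phi> 1) \<delta> sz * max (res_energy t - approx_energy v) 0"
proof -
  define B where "B = approx_energy v"
  define D where "D = 1 + ric \<Phi> 1"
  define \<kappa> where "\<kappa> = step_factor D \<delta> sz"
  have D1: "D \<ge> 1" using ric_nonneg[of \<Phi> 1] by (simp add: D_def)
  have \<kappa>: "0 \<le> \<kappa>" unfolding \<kappa>_def using step_factor_bounds[OF D1 \<delta> sz(2)] by simp
  show ?thesis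
  proof (cases "res_energy t \<le> B \<or> S \<subseteq> T t")
    case True
    then have "res_energy t \<le> B" using res_energy_le[of v t] v unfolding B_def by auto
    then have "res_energy (Suc t) \<le> B" using res_energy_Suc_le[of t] by linarith
    then show ?thesis using \<kappa> unfolding B_def[symmetric] D_def[symmetric] \<kappa>_def[symmetric] by simp
  next
    case False
    define m where "m = card (S - T t)"
    have m: "1 \<le> m" "m \<le> sz"
      using False sz(1) card_mono[of S "S - T t"] unfolding m_def by (auto simp: Suc_le_eq card_gt_0_iff)
    have "(1 - \<delta>) * (res_energy t - B) \<le> real m * D * (res_energy t - res_energy (Suc t))"
      using energy_gap_le_decrease[OF v rip] False unfolding B_def D_def m_def by simp
    then have "(1 - \<delta>) / D / real m * (res_energy t - B) \<le> res_energy t - res_energy (Suc t)"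
      using m D1 by (simp add: field_simps)
    then have "res_energy (Suc t) - B \<le> step_factor D \<delta> m * (res_energy t - B)"
      unfolding step_factor_def by (simp add: algebra_simps)
    also have "\<dots> \<le> \<kappa> * (res_energy t - B)"
      unfolding \<kappa>_def using step_factor_antimono[OF D1 \<delta>(2) m] False by (intro mult_right_mono) auto
    finally show ?thesis using False \<kappa> unfolding B_def[symmetric] D_def[symmetric] \<kappa>_def[symmetric] by simp
  qed
qed

lemma excess_energy_decay:
  assumes v: "supp v \<subseteq> T k \<union> S"
    and rip: "\<And>t. k \<le> t \<Longrightarrow> t < k + p \<Longrightarrow> rip_lower_on \<Phi> \<delta> (T t \<union> S)"
    and sz: "card S \<le> sz" "1 \<le> sz" and \<delta>: "0 \<le> \<delta>" "\<delta> < 1"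
  shows "max (res_energy (k + p) - approx_energy v) 0
    \<le> step_factor (1 + ric \<Phi> 1) \<delta> sz ^ p * max (res_energy k - approx_energy v) 0"
  using rip
proof (induction p)
  case (Suc p)
  define \<kappa> where "\<kappa> = step_factor (1 + ric \<Phi> 1) \<delta> sz"
  have \<kappa>: "0 \<le> \<kappa>" unfolding \<kappa>_def using step_factor_bounds[OF _ \<delta> sz(2)] ric_nonneg[of \<Phi> 1] by simp
  have v': "supp v \<subseteq> T (k + p) \<union> S" using v T_mono[of k "k + p"] by auto
  have "max (res_energy (k + Suc p) - approx_energy v) 0 \<le> \<kappa> * max (res_energy (k + p) - approx_energy v) 0"
    using excess_energy_step[OF v' Suc.prems[of "k + p"] sz \<delta>] unfolding \<kappa>_def by simp
  also have "\<dots> \<le> \<kappa> * (\<kappa> ^ p * max (res_energy k - approx_energy v) 0)"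
    using Suc \<kappa> unfolding \<kappa>_def by (intro mult_left_mono) auto
  finally show ?case unfolding \<kappa>_def by (simp add: mult.assoc)
qed simp

lemma res_energy_stage_bound:
  assumes v: "supp v \<subseteq> T k \<union> S"
    and rip: "\<And>t. k \<le> t \<Longrightarrow> t < k + p \<Longrightarrow> rip_lower_on \<Phi> \<delta> (T t \<union> S)"
    and sz: "card S \<le> sz" "1 \<le> sz" and \<delta>: "0 \<le> \<delta>" "\<delta> < 1" and q: "0 \<le> q" "q \<le> 1"
    and contract: "step_factor (1 + ric \<Phi> 1) \<delta> sz ^ p \<le> q \<or> S \<subseteq> T k"
  shows "res_energy (k + p) \<le> (1 - q) * approx_energy v + q * res_energy k"
proof (cases "res_energy k \<le> approx_energy v")
  case True
  then have "(1 - q) * res_energy k \<le> (1 - q) * approx_energy v" using q by (intro mult_left_mono) auto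
  then show ?thesis using res_energy_antimono[of k "k + p"] by (simp add: algebra_simps)
next
  case False
  define B where "B = approx_energy v"
  have "\<not> S \<subseteq> T k" using False v res_energy_le[of v k] by auto
  then have \<kappa>: "step_factor (1 + ric \<Phi> 1) \<delta> sz ^ p \<le> q" using contract by blast
  have "res_energy (k + p) - B \<le> max (res_energy (k + p) - B) 0" by simp
  also have "\<dots> \<le> step_factor (1 + ric \<Phi> 1) \<delta> sz ^ p * (res_energy k - B)"
    using excess_energy_decay[OF v rip sz \<delta>] False unfolding B_def by simp
  also have "\<dots> \<le> q * (res_energy k - B)" using \<kappa> False unfolding B_def by (intro mult_right_mono) auto
  finally show ?thesis unfolding B_def by (simp add: algebra_simps)
qed

abbreviation missing :: "nat \<Rightarrow> 'n set" where
  "missing k \<equiv> supp x - T k"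

abbreviation xsq :: "'n \<Rightarrow> real" where
  "xsq i \<equiv> (x$i)\<^sup>2"

lemma approx_energy_restrict_le:
  assumes "A \<subseteq> supp x"
  shows "approx_energy (restrict_vec (supp x - A) x) \<le> (1 + ric \<Phi> (card A)) * sum xsq A"
proof -
  have "x - restrict_vec (supp x - A) x = restrict_vec A x"
    using assms by (auto simp: vec_eq_iff restrict_vec_def supp_def)
  then have "\<Phi> *v x - \<Phi> *v restrict_vec (supp x - A) x = \<Phi> *v restrict_vec A x"
    by (metis matrix_vector_mult_diff_distrib)
  moreover have "card (supp (restrict_vec A x)) \<le> card A"
    by (rule card_mono[OF _ supp_restrict_vec]) simp
  ultimately show ?thesis
    using ric_upper_bound[of "restrict_vec A x" "card A" \<Phi>]
    by (simp add: approx_energy_def power2_norm_restrict_vec)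
qed

lemma missing_energy_le_res_energy:
  assumes rip: "rip_lower_on \<Phi> \<delta> (supp x \<union> T k)" and \<delta>: "\<delta> \<le> 1"
  shows "(1 - \<delta>) * sum xsq (missing k) \<le> res_energy k"
proof -
  obtain u where u: "supp u \<subseteq> T k" "r k = \<Phi> *v x - \<Phi> *v u" using residual_least_squares by blast
  have "(1 - \<delta>) * (norm (x - u))\<^sup>2 \<le> (norm (\<Phi> *v (x - u)))\<^sup>2"
    by (rule rip_lower_onD[OF rip]) (use supp_diff[of x u] u(1) in auto)
  also have "\<dots> = res_energy k" using u(2) by (simp add: res_energy_def matrix_vector_mult_diff_distrib)
  finally have "(1 - \<delta>) * (norm (x - u))\<^sup>2 \<le> res_energy k" .
  moreover have "sum xsq (missing k) = (\<Sum>i\<in>missing k. ((x - u)$i)\<^sup>2)"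
  proof (rule sum.cong)
    fix i assume "i \<in> missing k"
    then have "u $ i = 0" using u(1) by (auto simp: supp_def)
    then show "xsq i = ((x - u)$i)\<^sup>2" by simp
  qed simp
  then have "sum xsq (missing k) \<le> (norm (x - u))\<^sup>2"
    unfolding power2_norm_vec_eq_sum by (metis subset_UNIV sum_mono2 finite zero_le_power2)
  ultimately show ?thesis using \<delta> by (meson mult_left_mono diff_ge_0_iff_ge order_trans)
qed

lemma card_missing_le_if_res_energy_small:
  assumes "k \<le> k'" and rip: "rip_lower_on \<Phi> \<delta> (supp x \<union> T k')" "\<delta> \<le> 1"
    and d: "d \<le> card (missing k)"
    and small: "res_energy k' < (1 - \<delta>) * least_subset_sum xsq (missing k) (card (missing k) - d + 1)"
  shows "card (missing k') + d \<le> card (missing k)"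
proof (rule ccontr)
  assume "\<not> ?thesis"
  then have "card (missing k) - d + 1 \<le> card (missing k')" using d by simp
  moreover have "missing k' \<subseteq> missing k" using T_mono[OF assms(1)] by auto
  ultimately have "least_subset_sum xsq (missing k) (card (missing k) - d + 1) \<le> sum xsq (missing k')"
    by (intro least_subset_sum_le_superset) auto
  then have "(1 - \<delta>) * least_subset_sum xsq (missing k) (card (missing k) - d + 1) \<le> res_energy k'"
    using missing_energy_le_res_energy[OF rip] rip(2) by (smt (verit) mult_left_mono)
  with small show False by simp
qed

text \<open>The competitor keeps x except for the mt smallest missing entries; the other missing
  entries form S.\<close>
lemma res_energy_stage_least_sum:
  assumes k: "k \<le> k0" and mt: "mt \<le> card (missing k)"
    and rip: "\<And>t. k0 \<le> t \<Longrightarrow> t < k0 + p \<Longrightarrow> rip_lower_on \<Phi> \<delta> (supp x \<union> T t)"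
    and \<delta>: "0 \<le> \<delta>" "\<delta> < 1" and q: "0 \<le> q" "q \<le> 1"
    and sz: "1 \<le> sz" "card (missing k) - mt \<le> sz"
    and contract: "step_factor (1 + ric \<Phi> 1) \<delta> sz ^ p \<le> q \<or> mt = card (missing k)"
  shows "res_energy (k0 + p)
    \<le> (1 - q) * (1 + ric \<Phi> mt) * least_subset_sum xsq (missing k) mt + q * res_energy k0"
proof -
  obtain A where A: "A \<subseteq> missing k" "card A = mt" "sum xsq A = least_subset_sum xsq (missing k) mt"
    by (rule least_subset_sum_attained[OF finite mt])
  define S where "S = missing k - A"
  define v where "v = restrict_vec (supp x - A) x"
  have "supp v \<subseteq> supp x - A" unfolding v_def by (rule supp_restrict_vec)
  then have v: "supp v \<subseteq> T k0 \<union> S" using T_mono[OF k] unfolding S_def by auto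
  have rip': "rip_lower_on \<Phi> \<delta> (T t \<union> S)" if "k0 \<le> t" "t < k0 + p" for t
    by (rule rip_lower_on_subset[OF rip[OF that]]) (auto simp: S_def)
  have "card S = card (missing k) - mt" unfolding S_def using A by (simp add: card_Diff_subset)
  then have cardS: "card S \<le> sz" using sz by simp
  have "S \<subseteq> T k0" if "mt = card (missing k)"
    using A that card_subset_eq[of "missing k" A] unfolding S_def by auto
  then have contract': "step_factor (1 + ric \<Phi> 1) \<delta> sz ^ p \<le> q \<or> S \<subseteq> T k0"
    using contract by blast
  have "res_energy (k0 + p) \<le> (1 - q) * approx_energy v + q * res_energy k0"
    by (rule res_energy_stage_bound[OF v rip' cardS sz(1) \<delta> q contract'])
  moreover have "approx_energy v \<le> (1 + ric \<Phi> mt) * least_subset_sum xsq (missing k) mt"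
    using approx_energy_restrict_le[of A] A unfolding v_def by auto
  ultimately show ?thesis using q by (smt (verit) mult_left_mono mult.assoc)
qed

lemma progress_exact:
  assumes N: "1 \<le> card (missing k)" and g: "ric \<Phi> (card (missing k)) = 0"
    and rip: "rip_lower_on \<Phi> 0 (supp x \<union> T k)" "rip_lower_on \<Phi> 0 (supp x \<union> T (Suc k))"
  shows "card (missing (Suc k)) + 1 \<le> card (missing k)"
proof -
  define N where "N = card (missing k)"
  have ric0: "ric \<Phi> j = 0" if "j \<le> N" for j
    using ric_mono[OF that, of \<Phi>] ric_nonneg[of \<Phi> j] g unfolding N_def by simp
  have "res_energy (k + 1)
    \<le> (1 - 0) * (1 + ric \<Phi> (N - 1)) * least_subset_sum xsq (missing k) (N - 1) + 0 * res_energy k"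
    by (rule res_energy_stage_least_sum[where sz = 1 and \<delta> = 0])
       (use rip(1) ric0[of 1] N in \<open>auto simp: N_def step_factor_def less_Suc_eq_le dest: le_antisym\<close>)
  then have Q: "res_energy (Suc k) \<le> least_subset_sum xsq (missing k) (N - 1)" using ric0[of "N - 1"] by simp
  obtain i where i: "i \<in> missing k" using N by (metis card.empty ex_in_conv not_one_le_zero)
  have "least_subset_sum xsq (missing k) (N - 1) \<le> sum xsq (missing k - {i})"
    using i unfolding N_def by (intro least_subset_sum_le) auto
  also have "\<dots> < sum xsq (missing k)" using i by (simp add: sum_diff1 supp_def)
  also have "\<dots> = least_subset_sum xsq (missing k) (N - 1 + 1)"
    using N least_subset_sum_card[of "missing k" xsq] unfolding N_def by simp
  finally show ?thesis
    using card_missing_le_if_res_energy_small[of k "Suc k" 0 1] Q rip(2) N unfolding N_def by simp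
qed

definition omitted_energy :: "real \<Rightarrow> nat \<Rightarrow> nat \<Rightarrow> real" where
  "omitted_energy lam k l = least_subset_sum xsq (missing k) (card (missing k) - stage_size lam l)"

lemma res_energy_doubling_stage:
  assumes k: "k \<le> k0" and l: "1 \<le> l"
    and rip: "\<And>t. k0 \<le> t \<Longrightarrow> t < k0 + 2 ^ (l - 1) \<Longrightarrow> rip_lower_on \<Phi> \<delta> (supp x \<union> T t)"
    and \<delta>: "0 \<le> \<delta>" "\<delta> < 1" and lam: "lam > 0"
    and q: "exp (- ((1 - \<delta>) / (1 + ric \<Phi> 1)) * lam) \<le> q" "q \<le> 1"
  shows "res_energy (k0 + 2 ^ (l - 1))
    \<le> (1 - q) * (1 + ric \<Phi> (card (missing k))) * omitted_energy lam k l + q * res_energy k0"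
proof -
  define N where "N = card (missing k)"
  define mt where "mt = N - stage_size lam l"
  have q0: "0 \<le> q" using q(1) exp_ge_zero order_trans by blast
  have "res_energy (k0 + 2 ^ (l - 1))
    \<le> (1 - q) * (1 + ric \<Phi> mt) * least_subset_sum xsq (missing k) mt + q * res_energy k0"
  proof (rule res_energy_stage_least_sum[OF k _ rip \<delta> q0 q(2), where sz = "max 1 (stage_size lam l)"])
    show "step_factor (1 + ric \<Phi> 1) \<delta> (max 1 (stage_size lam l)) ^ 2 ^ (l - 1) \<le> q
      \<or> mt = card (missing k)"
    proof (cases "stage_size lam l = 0")
      case False
      then show ?thesis
        using step_factor_stage_size_power[OF lam _ \<delta> False, of "1 + ric \<Phi> 1"] ric_nonneg[of \<Phi> 1] q(1)
        by (simp add: max_def)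
    qed (simp add: mt_def N_def)
  qed (auto simp: mt_def N_def)
  also have "\<dots> \<le> (1 - q) * (1 + ric \<Phi> N) * least_subset_sum xsq (missing k) mt + q * res_energy k0"
    using ric_mono[of mt N \<Phi>] q(2) least_subset_sum_nonneg[of "missing k" mt xsq]
    by (intro add_right_mono mult_right_mono mult_left_mono) (auto simp: mt_def N_def)
  finally show ?thesis unfolding mt_def N_def omitted_energy_def .
qed

text \<open>Stage l ends after k + 2^l - 1 steps.\<close>
lemma res_energy_after_stages:
  assumes L: "1 \<le> L" and \<delta>: "0 \<le> \<delta>" "\<delta> < 1" and lam: "0 < lam"
    and q: "0 < q" "q < 1/2" "4 * q * (1 - q) = (1 - \<delta>) / (1 + ric \<Phi> (card (missing k)))"
      "exp (- ((1 - \<delta>) / (1 + ric \<Phi> 1)) * lam) \<le> q"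
    and last: "omitted_energy lam k L \<le> 2 * q * omitted_energy lam k (L - 1)"
    and before: "\<And>l. 1 \<le> l \<Longrightarrow> l < L \<Longrightarrow> 2 * q * omitted_energy lam k (l - 1) < omitted_energy lam k l"
    and pos: "omitted_energy lam k (L - 1) > 0"
    and rip: "\<And>t. t < k + (2 ^ L - 1) \<Longrightarrow> rip_lower_on \<Phi> \<delta> (supp x \<union> T t)"
  shows "res_energy (k + (2 ^ L - 1)) < (1 - \<delta>) * omitted_energy lam k (L - 1)"
proof -
  define g where "g = ric \<Phi> (card (missing k))"
  define K where "K l = k + (2 ^ l - 1)" for l :: nat
  have g: "0 \<le> g" unfolding g_def by (rule ric_nonneg)
  have K_Suc: "K l = K (l - 1) + 2 ^ (l - 1)" if "1 \<le> l" for l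
    using that unfolding K_def by (cases l) auto
  have K_le: "K l \<le> K L" if "l \<le> L" for l
    unfolding K_def using that by (intro add_left_mono diff_le_mono power_increasing) auto
  have "res_energy (K L) < (1 + g) * (4 * q * (1 - q)) * omitted_energy lam k (L - 1)"
  proof (rule doubling_recurrence_bound[OF q(1,2) g L last before pos])
    show "res_energy (K 0) \<le> (1 + g) * omitted_energy lam k 0"
      using res_energy_stage_least_sum[of k k "card (missing k)" 0 \<delta> 0 1] \<delta>
      by (simp add: K_def omitted_energy_def stage_size_def g_def)
    fix l assume l: "1 \<le> l" "l \<le> L"
    have "res_energy (K (l - 1) + 2 ^ (l - 1))
      \<le> (1 - q) * (1 + g) * omitted_energy lam k l + q * res_energy (K (l - 1))"
      unfolding g_def
    proof (rule res_energy_doubling_stage[OF _ l(1) _ \<delta> lam q(4)])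
      show "k \<le> K (l - 1)" unfolding K_def by (rule le_add1)
      fix t assume "t < K (l - 1) + 2 ^ (l - 1)"
      then have "t < K L" using K_le[OF l(2)] K_Suc[OF l(1)] by simp
      then show "rip_lower_on \<Phi> \<delta> (supp x \<union> T t)" by (intro rip) (simp add: K_def)
    qed (use q in simp)
    then show "res_energy (K l) \<le> (1 - q) * (1 + g) * omitted_energy lam k l + q * res_energy (K (l - 1))"
      using K_Suc[OF l(1)] by simp
  qed
  then show ?thesis using q(3) g unfolding K_def g_def by simp
qed

text \<open>Stage 0 omits all missing energy and late stages omit none, so some first stage L fails
  to keep the omitted energy above the factor a.\<close>
lemma omitted_energy_first_contraction:
  assumes N: "1 \<le> card (missing k)" and lam: "0 < lam" and a: "0 \<le> a"
  obtains L where "1 \<le> L" "omitted_energy lam k L \<le> a * omitted_energy lam k (L - 1)"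
    "\<And>l. 1 \<le> l \<Longrightarrow> l < L \<Longrightarrow> a * omitted_energy lam k (l - 1) < omitted_energy lam k l"
    "omitted_energy lam k (L - 1) > 0" "stage_size lam (L - 1) < card (missing k)"
proof -
  define u where "u = omitted_energy lam k"
  have u_nonneg: "u l \<ge> 0" for l
    unfolding u_def omitted_energy_def by (rule least_subset_sum_nonneg) auto
  have "u 0 = sum xsq (missing k)"
    unfolding u_def omitted_energy_def by (simp add: stage_size_def least_subset_sum_card)
  also have "\<dots> > 0"
  proof (rule sum_pos)
    show "missing k \<noteq> {}" using N by (metis card.empty not_one_le_zero)
  qed (auto simp: supp_def)
  finally have u_0: "u 0 > 0" .
  obtain n where "card (missing k) \<le> stage_size lam (Suc n)" using stage_size_unbounded[OF lam] by blast
  then have "u (Suc n) = 0" unfolding u_def omitted_energy_def by (simp add: least_subset_sum_0)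
  then obtain L where L: "1 \<le> L" "u L \<le> a * u (L - 1)" "u (L - 1) > 0"
    and before: "\<And>l. 1 \<le> l \<Longrightarrow> l < L \<Longrightarrow> a * u (l - 1) < u l"
    using first_contraction_index[of u, OF u_nonneg u_0, of "Suc n" a] a by auto
  moreover have "stage_size lam (L - 1) < card (missing k)"
  proof (rule ccontr)
    assume "\<not> ?thesis"
    then have "u (L - 1) = 0" unfolding u_def omitted_energy_def by (simp add: least_subset_sum_0)
    with L(3) show False by simp
  qed
  ultimately show ?thesis using that unfolding u_def by blast
qed

lemma progress_doubling:
  assumes c: "1 < c" and N: "N = card (missing k)" "1 \<le> N"
    and rip: "\<And>t. t \<le> k + nat \<lfloor>c * real N\<rfloor> \<Longrightarrow> rip_lower_on \<Phi> \<delta> (supp x \<union> T t)"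
    and \<delta>: "0 \<le> \<delta>" "\<delta> < 1"
    and strict: "omp_ratio (ric \<Phi> N) \<delta> < 1/2"
    and cb: "omp_bound (1 + ric \<Phi> 1) (ric \<Phi> N) \<delta> \<le> c"
  obtains P d where "1 \<le> d" "real P \<le> c * real d" "card (missing (k + P)) + d \<le> N"
proof -
  define lam where "lam = doubling_rate (1 + ric \<Phi> 1) (ric \<Phi> N) \<delta>"
  define q where "q = omp_ratio (ric \<Phi> N) \<delta>"
  have D: "1 \<le> 1 + ric \<Phi> 1" using ric_nonneg[of \<Phi> 1] by simp
  have lam: "0 < lam" "4 * lam \<le> c" "exp (- ((1 - \<delta>) / (1 + ric \<Phi> 1)) * lam) = q"
    using doubling_rate[OF D ric_nonneg[of \<Phi> N] \<delta>] cb unfolding lam_def q_def by auto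
  have q: "0 < q" "q < 1/2" "4 * q * (1 - q) = (1 - \<delta>) / (1 + ric \<Phi> N)"
    using omp_ratio_bounds[OF ric_nonneg[of \<Phi> N] \<delta>] strict unfolding q_def by auto
  obtain L where L: "1 \<le> L" "omitted_energy lam k L \<le> 2 * q * omitted_energy lam k (L - 1)"
    "\<And>l. 1 \<le> l \<Longrightarrow> l < L \<Longrightarrow> 2 * q * omitted_energy lam k (l - 1) < omitted_energy lam k l"
    "omitted_energy lam k (L - 1) > 0" "stage_size lam (L - 1) < N"
    using omitted_energy_first_contraction[of k lam "2 * q"] N lam(1) q(1) by auto
  define d where "d = stage_size lam (L - 1) + 1"
  define P where "P = (2::nat) ^ L - 1"
  have d: "d \<le> N" using L(5) unfolding d_def by simp
  have budget: "real P \<le> c * real d"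
    unfolding P_def d_def by (rule stage_budget[OF lam(1,2) _ L(1)]) (use c in simp)
  have "c * real d \<le> c * real N" using d c by (intro mult_left_mono) auto
  then have "k + P \<le> k + nat \<lfloor>c * real N\<rfloor>" using budget by (simp add: le_nat_floor)
  then have rip': "rip_lower_on \<Phi> \<delta> (supp x \<union> T t)" if "t \<le> k + P" for t
    using that rip by simp
  have "N - d + 1 = N - stage_size lam (L - 1)" using d unfolding d_def by simp
  then have omitted: "omitted_energy lam k (L - 1) = least_subset_sum xsq (missing k) (N - d + 1)"
    unfolding omitted_energy_def N(1) by simp
  have "res_energy (k + P) < (1 - \<delta>) * omitted_energy lam k (L - 1)"
    unfolding P_def
    by (rule res_energy_after_stages[OF L(1) \<delta> lam(1) q(1,2) _ _ L(2-4)])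
       (use q(3) lam(3) rip' N(1) in \<open>auto simp: P_def\<close>)
  then have "card (missing (k + P)) + d \<le> card (missing k)" unfolding omitted
    by (intro card_missing_le_if_res_energy_small[OF le_add1 rip'[OF order_refl]]) (use \<delta> d N(1) in auto)
  then show ?thesis using that[of d P] budget N(1) unfolding d_def by simp
qed

lemma progress:
  assumes c: "1 < c" and N: "N = card (missing k)" "1 \<le> N"
    and rip: "\<And>t. t \<le> k + nat \<lfloor>c * real N\<rfloor> \<Longrightarrow> rip_lower_on \<Phi> \<delta> (supp x \<union> T t)"
    and \<delta>: "0 \<le> \<delta>" "\<delta> < 1"
    and cb: "omp_bound (1 + ric \<Phi> 1) (ric \<Phi> N) \<delta> \<le> c"
  obtains P d where "1 \<le> d" "real P \<le> c * real d" "card (missing (k + P)) + d \<le> N"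
proof (cases "omp_ratio (ric \<Phi> N) \<delta> = 1/2")
  case True
  then have exact: "ric \<Phi> N = 0" "\<delta> = 0" using omp_ratio_eq_half_iff[OF ric_nonneg \<delta>(1)] by auto
  have "c \<le> c * real N" using c N(2) by simp
  then have "1 \<le> nat \<lfloor>c * real N\<rfloor>" using c by linarith
  then have "card (missing (Suc k)) + 1 \<le> N"
    using progress_exact[of k] rip[of k] rip[of "Suc k"] exact N by simp
  then show ?thesis using that[of 1 1] c by simp
next
  case False
  then have "omp_ratio (ric \<Phi> N) \<delta> < 1/2" using omp_ratio_bounds(2)[OF ric_nonneg[of \<Phi> N] \<delta>] by linarith
  then show ?thesis using progress_doubling[OF c N rip \<delta> _ cb] that by blast
qed

lemma support_recovered:
  assumes c: "1 < c"
  shows "card (missing k) = N \<Longrightarrow> ric \<Phi> (card (supp x \<union> T (k + nat \<lfloor>c * real N\<rfloor>))) < 1 \<Longrightarrow>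
    omp_bound (1 + ric \<Phi> 1) (ric \<Phi> N) (ric \<Phi> (card (supp x \<union> T (k + nat \<lfloor>c * real N\<rfloor>)))) \<le> c \<Longrightarrow>
    supp x \<subseteq> T (k + nat \<lceil>c * real N\<rceil>)"
proof (induction N arbitrary: k rule: less_induct)
  case (less N)
  define s where "s = card (supp x \<union> T (k + nat \<lfloor>c * real N\<rfloor>))"
  show ?case
  proof (cases "N = 0")
    case True
    then show ?thesis using less.prems(1) T_mono[of k "k + nat \<lceil>c * real N\<rceil>"] by auto
  next
    case False
    have rip: "rip_lower_on \<Phi> (ric \<Phi> s) (supp x \<union> T t)" if "t \<le> k + nat \<lfloor>c * real N\<rfloor>" for t
      using T_mono[OF that] unfolding s_def by (intro rip_lower_on_ric[OF order_refl] ric_mono card_mono) auto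
    have "1 \<le> N" using False by simp
    moreover have "ric \<Phi> s < 1" "omp_bound (1 + ric \<Phi> 1) (ric \<Phi> N) (ric \<Phi> s) \<le> c"
      using less.prems(2,3) unfolding s_def by auto
    ultimately obtain P d where Pd: "1 \<le> d" "real P \<le> c * real d" "card (missing (k + P)) + d \<le> N"
      using progress[OF c less.prems(1)[symmetric] _ rip ric_nonneg] by blast
    define N' where "N' = card (missing (k + P))"
    have "N' < N" using Pd unfolding N'_def by simp
    have "c * real N' + c * real d \<le> c * real N"
      using Pd(3) c unfolding N'_def by (simp flip: distrib_left of_nat_add)
    then have budget: "real P + c * real N' \<le> c * real N" using Pd(2) by simp
    define s' where "s' = card (supp x \<union> T (k + P + nat \<lfloor>c * real N'\<rfloor>))"
    have "T (k + P + nat \<lfloor>c * real N'\<rfloor>) \<subseteq> T (k + nat \<lfloor>c * real N\<rfloor>)"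
      using nat_floor_add_le[OF _ budget] c by (intro T_mono) simp
    then have "s' \<le> s" unfolding s_def s'_def by (intro card_mono) auto
    then have "omp_bound (1 + ric \<Phi> 1) (ric \<Phi> N') (ric \<Phi> s') \<le> omp_bound (1 + ric \<Phi> 1) (ric \<Phi> N) (ric \<Phi> s)"
      using \<open>N' < N\<close> less.prems(2) ric_nonneg[of \<Phi> 1] unfolding s_def
      by (intro omp_bound_mono ric_nonneg ric_mono) auto
    moreover have "ric \<Phi> s' < 1" using ric_mono[OF \<open>s' \<le> s\<close>, of \<Phi>] less.prems(2) unfolding s_def by linarith
    ultimately have "supp x \<subseteq> T (k + P + nat \<lceil>c * real N'\<rceil>)"
      using less.IH[OF \<open>N' < N\<close>, of "k + P"] less.prems(3) unfolding N'_def s'_def s_def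
      by (simp add: add.assoc)
    also have "\<dots> \<subseteq> T (k + nat \<lceil>c * real N\<rceil>)"
      using nat_ceiling_add_le[OF _ budget] c by (intro T_mono) simp
    finally show ?thesis .
  qed
qed

end

text \<open>The hypotheses involving K only place the statement inside a run of OMP_cK; the argument
  does not need them.\<close>
theorem theorem1:
  fixes \<Phi> :: "real^'n^'m" and x :: "real^'n" and K k N s :: nat and c :: real
    and T :: "nat \<Rightarrow> 'n set" and r :: "nat \<Rightarrow> real^'m"
  assumes "c > 1"
    and "card (supp x) \<le> K"
    and "omp_run \<Phi> (\<Phi> *v x) T r"
    and "k \<le> nat \<lceil>c * real K\<rceil>"
    and "N = card (supp x - T k)"
    and "s = card (supp x \<union> T (k + nat \<lfloor>c * real N\<rfloor>))"
    and "ric \<Phi> s < 1"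
    and "c \<ge> - (4 * (1 + ric \<Phi> 1) / (1 - ric \<Phi> s)) *
              ln (1/2 - 1/2 * sqrt ((ric \<Phi> N + ric \<Phi> s) / (1 + ric \<Phi> N)))"
  shows "supp x \<subseteq> T (k + nat \<lceil>c * real N\<rceil>)"
proof -
  interpret omp \<Phi> x T r by unfold_locales (rule assms(3))
  show ?thesis
    using support_recovered[OF assms(1), of k N] assms(5-8) unfolding omp_bound_def omp_ratio_def by simp
qed

end
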